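(* Let $G$ be a finite group and let $A, B\subseteq G$ be subsets such that the multiplication map $A\times B\to G$, $(a,b)\mapsto ab$, is a bijection. Then the order of the subgroup of $G$ generated by $A$ is a multiple of $\mathrm{card}(A)$, and the order of the subgroup of $G$ generated by $B$ is a multiple of $\mathrm{card}(B)$. *)

theory Defs
  imports "HOL-Algebra.Algebra"
begin

end

theory Submission
  imports Defs
begin

text \<open>If \<open>A \<subseteq> H\<close> for a subgroup \<open>H\<close>, then for \<open>a \<in> A\<close> we have \<open>a b \<in> H\<close> iff \<open>b \<in> H\<close>,
  so the factorization \<open>A \<times> B \<rightarrow> G\<close> restricts to a bijection \<open>A \<times> (B \<inter> H) \<rightarrow> H\<close> and
  \<open>|H| = |A| |B \<inter> H|\<close>. Taking \<open>H = \<langle>A\<rangle>\<close> gives the claim for \<open>A\<close>; symmetrically for \<open>B\<close>.\<close>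

lemma bij_betw_restrict_vimage:
  assumes "bij_betw f S T"
  shows "bij_betw f {x \<in> S. f x \<in> U} (T \<inter> U)"
  by (rule bij_betw_subset[OF assms]) (use assms in \<open>auto simp: bij_betw_def\<close>)

lemma (in group) subgroup_mult_mem_iff_right:
  assumes H: "subgroup H G" and a: "a \<in> H" and b: "b \<in> carrier G"
  shows "a \<otimes> b \<in> H \<longleftrightarrow> b \<in> H"
proof
  have aG: "a \<in> carrier G" using H a by (rule subgroup.mem_carrier)
  assume "a \<otimes> b \<in> H"
  then have "inv a \<otimes> (a \<otimes> b) \<in> H"
    by (rule subgroup.m_closed[OF H subgroup.m_inv_closed[OF H a]])
  moreover have "inv a \<otimes> (a \<otimes> b) = b"
    using aG b by (simp add: inv_solve_left')
  ultimately show "b \<in> H" by simp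
next
  assume "b \<in> H"
  then show "a \<otimes> b \<in> H" by (rule subgroup.m_closed[OF H a])
qed

lemma (in group) subgroup_mult_mem_iff_left:
  assumes H: "subgroup H G" and b: "b \<in> H" and a: "a \<in> carrier G"
  shows "a \<otimes> b \<in> H \<longleftrightarrow> a \<in> H"
proof
  have bG: "b \<in> carrier G" using H b by (rule subgroup.mem_carrier)
  assume "a \<otimes> b \<in> H"
  then have "(a \<otimes> b) \<otimes> inv b \<in> H"
    by (rule subgroup.m_closed[OF H _ subgroup.m_inv_closed[OF H b]])
  moreover have "(a \<otimes> b) \<otimes> inv b = a"
    using a bG by (simp add: inv_solve_right')
  ultimately show "a \<in> H" by simp
next
  assume "a \<in> H"
  then show "a \<otimes> b \<in> H" by (rule subgroup.m_closed[OF H _ b])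
qed

lemma (in group) factorization_card_subgroup_left:
  assumes "B \<subseteq> carrier G"
    and "bij_betw (\<lambda>(a, b). a \<otimes> b) (A \<times> B) (carrier G)"
    and "subgroup H G" and "A \<subseteq> H"
  shows "card H = card A * card (B \<inter> H)"
proof -
  have "a \<otimes> b \<in> H \<longleftrightarrow> b \<in> H" if "a \<in> A" and "b \<in> B" for a b
    using that assms(1,3,4) subgroup_mult_mem_iff_right by blast
  then have "{p \<in> A \<times> B. (\<lambda>(a, b). a \<otimes> b) p \<in> H} = A \<times> (B \<inter> H)"
    by auto
  moreover have "carrier G \<inter> H = H"
    using assms(3) subgroup.subset by blast
  ultimately have "bij_betw (\<lambda>(a, b). a \<otimes> b) (A \<times> (B \<inter> H)) H"
    using bij_betw_restrict_vimage[OF assms(2), of H] by simp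
  then show ?thesis
    by (metis bij_betw_same_card card_cartesian_product)
qed

lemma (in group) factorization_card_subgroup_right:
  assumes "A \<subseteq> carrier G"
    and "bij_betw (\<lambda>(a, b). a \<otimes> b) (A \<times> B) (carrier G)"
    and "subgroup H G" and "B \<subseteq> H"
  shows "card H = card (A \<inter> H) * card B"
proof -
  have "a \<otimes> b \<in> H \<longleftrightarrow> a \<in> H" if "a \<in> A" and "b \<in> B" for a b
    using that assms(1,3,4) subgroup_mult_mem_iff_left by blast
  then have "{p \<in> A \<times> B. (\<lambda>(a, b). a \<otimes> b) p \<in> H} = (A \<inter> H) \<times> B"
    by auto
  moreover have "carrier G \<inter> H = H"
    using assms(3) subgroup.subset by blast
  ultimately have "bij_betw (\<lambda>(a, b). a \<otimes> b) ((A \<inter> H) \<times> B) H"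
    using bij_betw_restrict_vimage[OF assms(2), of H] by simp
  then show ?thesis
    by (metis bij_betw_same_card card_cartesian_product)
qed

theorem lemma1p1:
  fixes G (structure) and A B :: "'a set"
  assumes "group G" and "finite (carrier G)"
    and "A \<subseteq> carrier G" and "B \<subseteq> carrier G"
    and "bij_betw (\<lambda>(a, b). a \<otimes> b) (A \<times> B) (carrier G)"
  shows "card A dvd card (generate G A) \<and> card B dvd card (generate G B)"
proof -
  interpret group G by fact
  have "card (generate G A) = card A * card (B \<inter> generate G A)"
    using assms(3-5) generate_is_subgroup generate.incl
    by (intro factorization_card_subgroup_left) auto
  moreover have "card (generate G B) = card (A \<inter> generate G B) * card B"
    using assms(3-5) generate_is_subgroup generate.incl
    by (intro factorization_card_subgroup_right) auto
  ultimately show ?thesis by simp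
qed

end
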